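(* Let $n\ge2$, $R_0>0$, $X\subset\mathbb R^n$, $U:=\{x\in\mathbb R^n:\operatorname{dist}(x,X)\le R_0\}$. Let $N\ge2$ be an integer, $0<R\le3^{1-N}R_0$, and $B_j=\overline B_R(x_j)$, $1\le j\le N$, closed balls with $x_j\in X$. For $x\in X$, $0<r\le R_0$, set $J(x,r):=\{j:B_j\subset B_r(x)\}$. Let $\Phi:\mathbb R_+\to\mathbb R_+$ be superadditive and $\lambda_1,\dots,\lambda_N\ge0$. Set $$b:=\min_{i\ne j}[\Phi(\lambda_i+\lambda_j)-\Phi(\lambda_i)-\Phi(\lambda_j)]\ge0,\quad \mathbf m:=\frac12\min_{i\ne j}|x_i-x_j|,\quad\rho:=\max(R,\mathbf m).$$ Suppose $h\ge0$ is a Borel function on $U\setminus\bigcup_jB_j$ such that for all $x\in X$ and $0<r\le R_0$: if $S_r(x)\cap B_j=\emptyset$ for all $j$, then $\int_{S_r(x)}h\ge\frac1r\Phi\big(\sum_{j\in J(x,r)}\lambda_j\big)$. Then $$\int_{U\setminus\bigcup_jB_j}h\ge\left(\ln\frac{R_0}{3^{N-1}R}\right)\sum_j\Phi(\lambda_j)+b\ln\frac{R_0}{3^{N-1}\rho}.$$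
   Context: $B_r(x)$ is the open ball and $S_r(x)$ the sphere of radius $r$ centered at $x$, with surface measure. $\Phi$ superadditive means $\Phi(s+t)\ge\Phi(s)+\Phi(t)$ for all $s,t\ge0$. *)

theory Defs
  imports "HOL-Analysis.Analysis"
begin

text \<open>Integral of a nonnegative function over the sphere S_r(x) with respect to the
(n-1)-dimensional surface measure, n = DIM('a).  The library has no surface measure, so
we use the standard cone-measure (polar coordinates) definition:
  integral over S_r(x) of h = n r^(n-1) * integral over the unit ball B_1(0) of h(x + r y/|y|) dy.\<close>
definition sphere_nn_integral :: "('a::euclidean_space \<Rightarrow> real) \<Rightarrow> 'a \<Rightarrow> real \<Rightarrow> ennreal" where
  "sphere_nn_integral h x r =
     ennreal (real DIM('a) * r ^ (DIM('a) - 1)) *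
     (\<integral>\<^sup>+ y. ennreal (h (x + (r / norm y) *\<^sub>R y)) * indicator (ball 0 1) y \<partial>lborel)"

definition superadditive :: "(real \<Rightarrow> real) \<Rightarrow> bool" where
  "superadditive \<Phi> \<longleftrightarrow> (\<forall>s t. 0 \<le> s \<longrightarrow> 0 \<le> t \<longrightarrow> \<Phi> (s + t) \<ge> \<Phi> s + \<Phi> t)"

end

theory Submission
  imports Defs
begin

text \<open>Ball construction. Every ball \<open>B\<^sub>j\<close> starts as its own cluster of radius \<open>R\<close>. Growing all
  cluster balls concentrically from radius \<open>s\<close> to \<open>t\<close> sweeps disjoint annuli inside \<open>U\<close> whose
  spheres avoid the \<open>B\<^sub>j\<close>; by the sphere hypothesis and polar coordinates the annulus around a
  cluster of total mass \<open>\<Lambda>\<close> carries energy at least \<open>\<Phi>(\<Lambda>) ln(t/s)\<close>. When two cluster balls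
  of radius \<open>t\<close> touch, they are replaced by one ball of radius \<open>3t\<close> around one of the two
  centres. By superadditivity the clusters carry at least \<open>\<Sum>\<^sub>j \<Phi>(\<lambda>\<^sub>j)\<close> per unit of
  log-radius, and at least \<open>b\<close> more after the first merge; since at most \<open>N - 1\<close> merges
  occur, each tripling the radius, the growth reaches \<open>R\<^sub>0\<close> after losing at most a factor
  \<open>3 ^ (N - 1)\<close> in the radius.\<close>

lemma ennreal_add_le: "ennreal (x + y) \<le> ennreal x + ennreal y"
  by (auto simp: ennreal_plus_if intro: ennreal_leI)

lemma ln_div_mult_split:
  fixes a q s t :: real
  assumes "0 < a" "0 < q" "0 < s" "0 < t"
  shows "ln (a / (q * s)) = ln (t / s) + ln (a / (q * t))"
proof -
  have "a / (q * s) = t / s * (a / (q * t))" using assms by (simp add: field_simps)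
  moreover have "ln (t / s * (a / (q * t))) = ln (t / s) + ln (a / (q * t))"
    by (rule ln_mult_pos) (use assms in simp_all)
  ultimately show ?thesis by simp
qed

lemma nn_integral_lborel_scaleR:
  fixes G :: "'a::euclidean_space \<Rightarrow> ennreal"
  assumes [measurable]: "G \<in> borel_measurable borel" and "0 < c"
  shows "(\<integral>\<^sup>+z. G z \<partial>lborel) = ennreal (c ^ DIM('a)) * (\<integral>\<^sup>+y. G (c *\<^sub>R y) \<partial>lborel)"
proof -
  have "(lborel::'a measure) = density (distr lborel borel (\<lambda>x. 0 + c *\<^sub>R x)) (\<lambda>_. \<bar>c\<bar> ^ DIM('a))"
    using \<open>0 < c\<close> by (intro lborel_affine) simp
  then have "(\<integral>\<^sup>+z. G z \<partial>lborel)
      = (\<integral>\<^sup>+z. G z \<partial>density (distr lborel borel (\<lambda>x. 0 + c *\<^sub>R x)) (\<lambda>_. \<bar>c\<bar> ^ DIM('a)))"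
    by (rule arg_cong)
  also have "\<dots> = (\<integral>\<^sup>+y. ennreal (\<bar>c\<bar> ^ DIM('a)) * G (c *\<^sub>R y) \<partial>lborel)"
    by (simp add: nn_integral_density nn_integral_distr)
  finally show ?thesis
    using \<open>0 < c\<close> by (simp add: nn_integral_cmult)
qed

lemma nn_integral_power_tail:
  fixes a :: real
  assumes "0 < a" "n \<noteq> 0"
  shows "(\<integral>\<^sup>+u. ennreal (real n * a ^ n / u ^ (n + 1)) * indicator {a..} u \<partial>lborel) = 1"
proof -
  have "(\<integral>\<^sup>+u. ennreal (real n * a ^ n / u ^ (n + 1)) * indicator {a..} u \<partial>lborel) = 0 - (- (a ^ n) / a ^ n)"
  proof (rule nn_integral_FTC_atLeast[where F = "\<lambda>u. - (a ^ n) / u ^ n"])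
    fix x assume "a \<le> x"
    then have "0 < x" using \<open>0 < a\<close> by simp
    have "n + n = (n + 1) + (n - 1)" using \<open>n \<noteq> 0\<close> by simp
    then have "x ^ n * x ^ n = x ^ (n + 1) * x ^ (n - 1)" by (metis power_add)
    then have "(0 * x ^ n - (- (a ^ n)) * (real n * x ^ (n - Suc 0))) / (x ^ n * x ^ n)
        = real n * a ^ n / x ^ (n + 1)"
      using \<open>0 < x\<close> by simp
    moreover have "((\<lambda>u. - (a ^ n) / u ^ n) has_real_derivative
        (0 * x ^ n - (- (a ^ n)) * (real n * x ^ (n - Suc 0))) / (x ^ n * x ^ n)) (at x)"
      by (rule DERIV_divide[OF DERIV_const DERIV_pow]) (use \<open>0 < x\<close> in simp)
    ultimately show "((\<lambda>u. - (a ^ n) / u ^ n) has_real_derivative real n * a ^ n / x ^ (n + 1)) (at x)"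
      by simp
    show "0 \<le> real n * a ^ n / x ^ (n + 1)" using \<open>0 < x\<close> \<open>0 < a\<close> by simp
  next
    have "((\<lambda>u. - (a ^ n) * inverse (u ^ n)) \<longlongrightarrow> - (a ^ n) * 0) at_top"
      by (intro tendsto_mult tendsto_const tendsto_inverse_0_at_top filterlim_pow_at_top filterlim_ident)
        (use \<open>n \<noteq> 0\<close> in simp)
    then show "((\<lambda>u. - (a ^ n) / u ^ n) \<longlongrightarrow> 0) at_top" by (simp add: divide_inverse)
  qed simp
  then show ?thesis using \<open>0 < a\<close> by simp
qed

text \<open>Densities of the polar integral in the coordinates \<open>(r, y)\<close>, \<open>(u, y)\<close> with \<open>r = u \<bar>y\<bar>\<close>,
  and \<open>(u, z)\<close> with \<open>z = u y\<close>; here \<open>y\<close> ranges over the unit ball.\<close>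

definition polar_weight :: "nat \<Rightarrow> real \<Rightarrow> 'a::euclidean_space \<Rightarrow> real" where
  "polar_weight n r y = (if 0 < r \<and> norm y < 1 then real n * r ^ (n - 1) else 0)"

definition polar_weight_rescaled :: "nat \<Rightarrow> real \<Rightarrow> 'a::euclidean_space \<Rightarrow> real" where
  "polar_weight_rescaled n u y = (if 0 < u \<and> norm y < 1 then real n * u ^ (n - 1) * norm y ^ n else 0)"

definition polar_weight_dilated :: "nat \<Rightarrow> real \<Rightarrow> 'a::euclidean_space \<Rightarrow> real" where
  "polar_weight_dilated n u z = (if 0 < u \<and> norm z < u then real n * norm z ^ n / u ^ (n + 1) else 0)"

lemma polar_weights_nonneg [simp]:
  "0 \<le> polar_weight n r y" "0 \<le> polar_weight_rescaled n r y" "0 \<le> polar_weight_dilated n r y"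
  by (simp_all add: polar_weight_def polar_weight_rescaled_def polar_weight_dilated_def)

lemma polar_weights_measurable [measurable]:
  fixes y :: "'a::euclidean_space"
  shows "(\<lambda>(r, y). polar_weight n r (y::'a)) \<in> borel_measurable (lborel \<Otimes>\<^sub>M lborel)"
    and "(\<lambda>(u, y). polar_weight_rescaled n u (y::'a)) \<in> borel_measurable (lborel \<Otimes>\<^sub>M lborel)"
    and "(\<lambda>(u, z). polar_weight_dilated n u (z::'a)) \<in> borel_measurable (lborel \<Otimes>\<^sub>M lborel)"
    and "(\<lambda>(z, u). polar_weight_dilated n u (z::'a)) \<in> borel_measurable (lborel \<Otimes>\<^sub>M lborel)"
    and "(\<lambda>r. polar_weight n r y) \<in> borel_measurable borel"
    and "(\<lambda>u. polar_weight_dilated n u y) \<in> borel_measurable borel"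
    and "(\<lambda>z. polar_weight_dilated n u (z::'a)) \<in> borel_measurable borel"
proof -
  show "(\<lambda>(r, y). polar_weight n r (y::'a)) \<in> borel_measurable (lborel \<Otimes>\<^sub>M lborel)"
    "(\<lambda>r. polar_weight n r y) \<in> borel_measurable borel"
    unfolding polar_weight_def by measurable
  show "(\<lambda>(u, y). polar_weight_rescaled n u (y::'a)) \<in> borel_measurable (lborel \<Otimes>\<^sub>M lborel)"
    unfolding polar_weight_rescaled_def by measurable
  show "(\<lambda>(u, z). polar_weight_dilated n u (z::'a)) \<in> borel_measurable (lborel \<Otimes>\<^sub>M lborel)"
    "(\<lambda>(z, u). polar_weight_dilated n u (z::'a)) \<in> borel_measurable (lborel \<Otimes>\<^sub>M lborel)"
    "(\<lambda>u. polar_weight_dilated n u y) \<in> borel_measurable borel"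
    "(\<lambda>z. polar_weight_dilated n u (z::'a)) \<in> borel_measurable borel"
    unfolding polar_weight_dilated_def by measurable
qed

lemma nn_integral_polar_weight_rescale:
  fixes F :: "'a::euclidean_space \<Rightarrow> ennreal"
  assumes [measurable]: "F \<in> borel_measurable borel" and "y \<noteq> 0" "1 \<le> n"
  shows "(\<integral>\<^sup>+r. F ((r / norm y) *\<^sub>R y) * ennreal (polar_weight n r y) \<partial>lborel)
       = (\<integral>\<^sup>+u. F (u *\<^sub>R y) * ennreal (polar_weight_rescaled n u y) \<partial>lborel)"
proof -
  have "0 < norm y" using \<open>y \<noteq> 0\<close> by simp
  have weight: "norm y * polar_weight n (norm y * u) y = polar_weight_rescaled n u y" for u
  proof (cases "0 < u \<and> norm y < 1")
    case True
    have "norm y * (real n * (norm y * u) ^ (n - 1)) = real n * u ^ (n - 1) * (norm y * norm y ^ (n - 1))"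
      by (simp add: power_mult_distrib)
    also have "norm y * norm y ^ (n - 1) = norm y ^ n"
      using \<open>1 \<le> n\<close> by (simp flip: power_Suc)
    finally show ?thesis
      using True \<open>0 < norm y\<close> by (simp add: polar_weight_def polar_weight_rescaled_def)
  qed (use \<open>0 < norm y\<close> in \<open>auto simp: polar_weight_def polar_weight_rescaled_def zero_less_mult_iff\<close>)
  have "(\<integral>\<^sup>+r. F ((r / norm y) *\<^sub>R y) * ennreal (polar_weight n r y) \<partial>lborel)
      = ennreal (norm y) * (\<integral>\<^sup>+u. F ((norm y * u / norm y) *\<^sub>R y) * ennreal (polar_weight n (norm y * u) y) \<partial>lborel)"
  proof -
    have "(\<lambda>r. F ((r / norm y) *\<^sub>R y) * ennreal (polar_weight n r y)) \<in> borel_measurable borel"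
      by measurable
    from nn_integral_real_affine[OF this, of "norm y" 0] show ?thesis
      using \<open>0 < norm y\<close> by simp
  qed
  also have "\<dots> = (\<integral>\<^sup>+u. ennreal (norm y) * (F ((norm y * u / norm y) *\<^sub>R y) * ennreal (polar_weight n (norm y * u) y)) \<partial>lborel)"
    by (rule nn_integral_cmult[symmetric]) measurable
  also have "\<dots> = (\<integral>\<^sup>+u. F (u *\<^sub>R y) * ennreal (polar_weight_rescaled n u y) \<partial>lborel)"
  proof (rule nn_integral_cong)
    fix u
    have w: "ennreal (norm y) * ennreal (polar_weight n (norm y * u) y) = ennreal (polar_weight_rescaled n u y)"
      by (subst ennreal_mult''[symmetric]) (simp_all add: weight)
    have e: "norm y * u / norm y = u" using \<open>0 < norm y\<close> by simp
    show "ennreal (norm y) * (F ((norm y * u / norm y) *\<^sub>R y) * ennreal (polar_weight n (norm y * u) y))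
        = F (u *\<^sub>R y) * ennreal (polar_weight_rescaled n u y)"
      unfolding e w[symmetric] by (simp only: ac_simps)
  qed
  finally show ?thesis .
qed

lemma nn_integral_polar_weight_dilate:
  fixes F :: "'a::euclidean_space \<Rightarrow> ennreal"
  assumes [measurable]: "F \<in> borel_measurable borel"
  shows "(\<integral>\<^sup>+y. F (u *\<^sub>R y) * ennreal (polar_weight_rescaled DIM('a) u y) \<partial>lborel)
       = (\<integral>\<^sup>+z. F z * ennreal (polar_weight_dilated DIM('a) u z) \<partial>lborel)"
proof (cases "0 < u")
  case False
  then show ?thesis by (simp add: polar_weight_rescaled_def polar_weight_dilated_def)
next
  case True
  let ?n = "DIM('a)"
  have weight: "u ^ ?n * polar_weight_dilated ?n u (u *\<^sub>R y) = polar_weight_rescaled ?n u y" for y :: 'a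
  proof (cases "norm y < 1")
    case True
    have "?n + ?n = (?n + 1) + (?n - 1)" using DIM_positive[where 'a = 'a] by linarith
    then have "u ^ ?n * u ^ ?n = u ^ (?n + 1) * u ^ (?n - 1)" by (metis power_add)
    then have "u ^ ?n * (real ?n * (u * norm y) ^ ?n / u ^ (?n + 1)) = real ?n * u ^ (?n - 1) * norm y ^ ?n"
      using \<open>0 < u\<close> by (simp add: power_mult_distrib field_simps)
    then show ?thesis
      using True \<open>0 < u\<close>
      by (simp add: polar_weight_rescaled_def polar_weight_dilated_def mult_less_cancel_left_pos abs_of_pos)
  qed (use \<open>0 < u\<close> in \<open>simp add: polar_weight_rescaled_def polar_weight_dilated_def
      mult_less_cancel_left_pos abs_of_pos\<close>)
  have "(\<integral>\<^sup>+z. F z * ennreal (polar_weight_dilated ?n u z) \<partial>lborel)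
      = ennreal (u ^ ?n) * (\<integral>\<^sup>+y. F (u *\<^sub>R y) * ennreal (polar_weight_dilated ?n u (u *\<^sub>R y)) \<partial>lborel)"
    by (rule nn_integral_lborel_scaleR[OF _ True]) measurable
  also have "\<dots> = (\<integral>\<^sup>+y. ennreal (u ^ ?n) * (F (u *\<^sub>R y) * ennreal (polar_weight_dilated ?n u (u *\<^sub>R y))) \<partial>lborel)"
    by (rule nn_integral_cmult[symmetric]) measurable
  also have "\<dots> = (\<integral>\<^sup>+y. F (u *\<^sub>R y) * ennreal (polar_weight_rescaled ?n u y) \<partial>lborel)"
  proof (rule nn_integral_cong)
    fix y :: 'a
    have w: "ennreal (u ^ ?n) * ennreal (polar_weight_dilated ?n u (u *\<^sub>R y)) = ennreal (polar_weight_rescaled ?n u y)"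
      by (subst ennreal_mult''[symmetric]) (simp_all add: weight)
    show "ennreal (u ^ ?n) * (F (u *\<^sub>R y) * ennreal (polar_weight_dilated ?n u (u *\<^sub>R y)))
        = F (u *\<^sub>R y) * ennreal (polar_weight_rescaled ?n u y)"
      unfolding w[symmetric] by (simp only: ac_simps)
  qed
  finally show ?thesis by simp
qed

lemma nn_integral_polar_weight_dilated_le:
  fixes z :: "'a::euclidean_space"
  assumes "z \<noteq> 0"
  shows "(\<integral>\<^sup>+u. c * ennreal (polar_weight_dilated DIM('a) u z) \<partial>lborel) \<le> c"
proof -
  have "(\<integral>\<^sup>+u. c * ennreal (polar_weight_dilated DIM('a) u z) \<partial>lborel)
      = c * (\<integral>\<^sup>+u. ennreal (polar_weight_dilated DIM('a) u z) \<partial>lborel)"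
    by (rule nn_integral_cmult) measurable
  also have "(\<integral>\<^sup>+u. ennreal (polar_weight_dilated DIM('a) u z) \<partial>lborel)
      \<le> (\<integral>\<^sup>+u. ennreal (real DIM('a) * norm z ^ DIM('a) / u ^ (DIM('a) + 1)) * indicator {norm z..} u \<partial>lborel)"
    by (rule nn_integral_mono) (auto simp: polar_weight_dilated_def indicator_def)
  also have "\<dots> = 1"
    by (rule nn_integral_power_tail) (use \<open>z \<noteq> 0\<close> in simp_all)
  finally show ?thesis by (simp add: mult_left_mono)
qed

lemma nn_integral_polar_le:
  fixes F :: "'a::euclidean_space \<Rightarrow> ennreal"
  assumes [measurable]: "F \<in> borel_measurable borel"
  shows "(\<integral>\<^sup>+r. ennreal (if 0 < r then real DIM('a) * r ^ (DIM('a) - 1) else 0) *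
            (\<integral>\<^sup>+y. F ((r / norm y) *\<^sub>R y) * indicator (ball 0 1) y \<partial>lborel) \<partial>lborel)
         \<le> (\<integral>\<^sup>+z. F z \<partial>lborel)"
proof -
  let ?n = "DIM('a)"
  have "1 \<le> ?n" using DIM_positive[where 'a = 'a] by linarith
  have [measurable]: "ball (0::'a) 1 \<in> sets borel" by simp
  interpret lborel_pair: pair_sigma_finite "lborel :: real measure" "lborel :: 'a measure" ..
  interpret lborel_pair': pair_sigma_finite "lborel :: 'a measure" "lborel :: real measure" ..
  have "(\<integral>\<^sup>+r. ennreal (if 0 < r then real ?n * r ^ (?n - 1) else 0) *
            (\<integral>\<^sup>+y. F ((r / norm y) *\<^sub>R y) * indicator (ball 0 1) y \<partial>lborel) \<partial>lborel)
      = (\<integral>\<^sup>+r. (\<integral>\<^sup>+y. F ((r / norm y) *\<^sub>R y) * ennreal (polar_weight ?n r y) \<partial>lborel) \<partial>lborel)"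
  proof (rule nn_integral_cong)
    fix r :: real
    have "ennreal (if 0 < r then real ?n * r ^ (?n - 1) else 0) *
          (\<integral>\<^sup>+y. F ((r / norm y) *\<^sub>R y) * indicator (ball 0 1) y \<partial>lborel)
        = (\<integral>\<^sup>+y. ennreal (if 0 < r then real ?n * r ^ (?n - 1) else 0) *
            (F ((r / norm y) *\<^sub>R y) * indicator (ball 0 1) y) \<partial>lborel)"
      by (rule nn_integral_cmult[symmetric]) measurable
    also have "\<dots> = (\<integral>\<^sup>+y. F ((r / norm y) *\<^sub>R y) * ennreal (polar_weight ?n r y) \<partial>lborel)"
      by (rule nn_integral_cong) (auto simp: polar_weight_def indicator_def mult.commute)
    finally show "ennreal (if 0 < r then real ?n * r ^ (?n - 1) else 0) *
          (\<integral>\<^sup>+y. F ((r / norm y) *\<^sub>R y) * indicator (ball 0 1) y \<partial>lborel)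
        = (\<integral>\<^sup>+y. F ((r / norm y) *\<^sub>R y) * ennreal (polar_weight ?n r y) \<partial>lborel)" .
  qed
  also have "\<dots> = (\<integral>\<^sup>+y. (\<integral>\<^sup>+r. F ((r / norm y) *\<^sub>R y) * ennreal (polar_weight ?n r y) \<partial>lborel) \<partial>lborel)"
    by (rule lborel_pair.Fubini'[symmetric]) measurable
  also have "\<dots> = (\<integral>\<^sup>+y. (\<integral>\<^sup>+u. F (u *\<^sub>R y) * ennreal (polar_weight_rescaled ?n u y) \<partial>lborel) \<partial>lborel)"
    using AE_lborel_singleton[of "0::'a"]
    by (intro nn_integral_cong_AE) (auto elim!: eventually_mono intro: nn_integral_polar_weight_rescale \<open>1 \<le> ?n\<close>)
  also have "\<dots> = (\<integral>\<^sup>+u. (\<integral>\<^sup>+y. F (u *\<^sub>R y) * ennreal (polar_weight_rescaled ?n u y) \<partial>lborel) \<partial>lborel)"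
    by (rule lborel_pair.Fubini') measurable
  also have "\<dots> = (\<integral>\<^sup>+u. (\<integral>\<^sup>+z. F z * ennreal (polar_weight_dilated ?n u z) \<partial>lborel) \<partial>lborel)"
    by (intro nn_integral_cong nn_integral_polar_weight_dilate) measurable
  also have "\<dots> = (\<integral>\<^sup>+z. (\<integral>\<^sup>+u. F z * ennreal (polar_weight_dilated ?n u z) \<partial>lborel) \<partial>lborel)"
    by (rule lborel_pair.Fubini') measurable
  also have "\<dots> \<le> (\<integral>\<^sup>+z. F z \<partial>lborel)"
    using AE_lborel_singleton[of "0::'a"]
    by (intro nn_integral_mono_AE) (auto elim!: eventually_mono intro: nn_integral_polar_weight_dilated_le)
  finally show ?thesis .
qed

lemma nn_integral_inverse_Ioo:
  fixes s t c :: real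
  assumes "0 < s" "s \<le> t" "0 \<le> c"
  shows "(\<integral>\<^sup>+r. indicator {s<..<t} r * ennreal (c / r) \<partial>lborel) = ennreal (c * ln (t / s))"
proof -
  have "((\<lambda>r. c / r) has_integral (c * ln t - c * ln s)) {s..t}"
  proof (rule fundamental_theorem_of_calculus[where f = "\<lambda>r. c * ln r"])
    fix x assume "x \<in> {s..t}"
    then have "0 < x" using \<open>0 < s\<close> by simp
    then have "((\<lambda>r. c * ln r) has_real_derivative c * (1 / x)) (at x within {s..t})"
      by (auto intro!: derivative_eq_intros)
    then show "((\<lambda>r. c * ln r) has_vector_derivative c / x) (at x within {s..t})"
      by (simp add: has_real_derivative_iff_has_vector_derivative)
  qed fact
  then have "((\<lambda>r. c / r) has_integral (c * ln t - c * ln s)) {s<..<t}"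
    by (simp add: has_integral_Icc_iff_Ioo)
  then have "(\<integral>\<^sup>+r. indicator {s<..<t} r * (c / r) \<partial>lborel) = c * ln t - c * ln s"
    by (rule nn_integral_has_integral_lebesgue[rotated]) (use assms in simp)
  moreover have "c * ln t - c * ln s = c * ln (t / s)"
    using assms by (simp add: ln_div algebra_simps)
  moreover have "(\<integral>\<^sup>+r. indicator {s<..<t} r * ennreal (c / r) \<partial>lborel)
      = (\<integral>\<^sup>+r. indicator {s<..<t} r * (c / r) \<partial>lborel)"
    by (rule nn_integral_cong) (auto simp: indicator_def)
  ultimately show ?thesis by simp
qed

lemma nn_integral_annulus_ge:
  fixes h :: "'a::euclidean_space \<Rightarrow> real" and x0 :: 'a and s t c :: real
  defines "A \<equiv> {z. s < dist x0 z \<and> dist x0 z < t}"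
  assumes h_meas [measurable]: "(\<lambda>z. ennreal (h z) * indicator A z) \<in> borel_measurable borel"
    and "0 < s" "s \<le> t" "0 \<le> c"
    and sphere_ge: "\<And>r. s < r \<Longrightarrow> r < t \<Longrightarrow> ennreal (c / r) \<le> sphere_nn_integral h x0 r"
  shows "ennreal (c * ln (t / s)) \<le> (\<integral>\<^sup>+z. ennreal (h z) * indicator A z \<partial>lborel)"
proof -
  define F where "F z = ennreal (h (x0 + z)) * indicator A (x0 + z)" for z
  have [measurable]: "F \<in> borel_measurable borel"
    unfolding F_def by (rule measurable_compose[OF _ h_meas, of "\<lambda>z. x0 + z"]) simp
  have "(\<integral>\<^sup>+z. ennreal (h z) * indicator A z \<partial>lborel)
      = (\<integral>\<^sup>+z. ennreal (h z) * indicator A z \<partial>distr lborel borel ((+) x0))"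
    by (simp add: lborel_distr_plus)
  also have "\<dots> = (\<integral>\<^sup>+z. F z \<partial>lborel)"
    unfolding F_def by (rule nn_integral_distr) measurable
  finally have translate: "(\<integral>\<^sup>+z. ennreal (h z) * indicator A z \<partial>lborel) = (\<integral>\<^sup>+z. F z \<partial>lborel)" .
  have sphere_eq: "ennreal (if 0 < r then real DIM('a) * r ^ (DIM('a) - 1) else 0) *
      (\<integral>\<^sup>+y. F ((r / norm y) *\<^sub>R y) * indicator (ball 0 1) y \<partial>lborel) = sphere_nn_integral h x0 r"
    if "s < r" "r < t" for r
  proof -
    have "(\<integral>\<^sup>+y. F ((r / norm y) *\<^sub>R y) * indicator (ball 0 1) y \<partial>lborel)
        = (\<integral>\<^sup>+y. ennreal (h (x0 + (r / norm y) *\<^sub>R y)) * indicator (ball 0 1) y \<partial>lborel)"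
      using AE_lborel_singleton[of "0::'a"] that \<open>0 < s\<close>
      by (intro nn_integral_cong_AE) (auto elim!: eventually_mono simp: F_def A_def dist_norm)
    then show ?thesis
      using that \<open>0 < s\<close> by (simp add: sphere_nn_integral_def)
  qed
  have "ennreal (c * ln (t / s)) = (\<integral>\<^sup>+r. indicator {s<..<t} r * ennreal (c / r) \<partial>lborel)"
    by (rule nn_integral_inverse_Ioo[symmetric]) fact+
  also have "\<dots> \<le> (\<integral>\<^sup>+r. ennreal (if 0 < r then real DIM('a) * r ^ (DIM('a) - 1) else 0) *
      (\<integral>\<^sup>+y. F ((r / norm y) *\<^sub>R y) * indicator (ball 0 1) y \<partial>lborel) \<partial>lborel)"
  proof (intro nn_integral_mono)
    fix r
    show "indicator {s<..<t} r * ennreal (c / r) \<le> ennreal (if 0 < r then real DIM('a) * r ^ (DIM('a) - 1) else 0) *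
        (\<integral>\<^sup>+y. F ((r / norm y) *\<^sub>R y) * indicator (ball 0 1) y \<partial>lborel)"
    proof (cases "s < r \<and> r < t")
      case True
      then show ?thesis by (subst sphere_eq) (simp_all add: sphere_ge)
    qed simp
  qed
  also have "\<dots> \<le> (\<integral>\<^sup>+z. F z \<partial>lborel)"
    by (rule nn_integral_polar_le) measurable
  finally show ?thesis
    unfolding translate .
qed

lemma superadditiveD: "superadditive \<Phi> \<Longrightarrow> 0 \<le> s \<Longrightarrow> 0 \<le> t \<Longrightarrow> \<Phi> s + \<Phi> t \<le> \<Phi> (s + t)"
  by (simp add: superadditive_def)

lemma superadditive_mono:
  assumes "superadditive \<Phi>" "\<And>t. 0 \<le> t \<Longrightarrow> 0 \<le> \<Phi> t" "0 \<le> a" "a \<le> b"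
  shows "\<Phi> a \<le> \<Phi> b"
  using superadditiveD[OF assms(1) \<open>0 \<le> a\<close>, of "b - a"] assms(2)[of "b - a"] \<open>a \<le> b\<close> by simp

lemma superadditive_sum_le:
  assumes "superadditive \<Phi>" "0 \<le> \<Phi> 0" "\<And>j. j \<in> S \<Longrightarrow> 0 \<le> lam j"
  shows "(\<Sum>j\<in>S. \<Phi> (lam j)) \<le> \<Phi> (\<Sum>j\<in>S. lam j)"
proof (cases "finite S")
  case True
  then show ?thesis using assms(3)
  proof (induction S rule: finite_induct)
    case (insert x S)
    then have "\<Phi> (lam x) + \<Phi> (\<Sum>j\<in>S. lam j) \<le> \<Phi> (lam x + (\<Sum>j\<in>S. lam j))"
      by (intro superadditiveD[OF assms(1)] sum_nonneg) auto
    then show ?case using insert by simp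
  qed (use assms(2) in simp)
qed (use assms(2) in simp)

lemma superadditive_sum_le_gap:
  assumes "superadditive \<Phi>" "0 \<le> \<Phi> 0" "finite S" "\<And>k. k \<in> S \<Longrightarrow> 0 \<le> lam k"
    and "i \<in> S" "j \<in> S" "i \<noteq> j"
  shows "(\<Sum>k\<in>S. \<Phi> (lam k)) + (\<Phi> (lam i + lam j) - \<Phi> (lam i) - \<Phi> (lam j)) \<le> \<Phi> (\<Sum>k\<in>S. lam k)"
proof -
  let ?T = "S - {i} - {j}"
  have "(\<Sum>k\<in>S. lam k) = lam i + lam j + (\<Sum>k\<in>?T. lam k)"
    and "(\<Sum>k\<in>S. \<Phi> (lam k)) = \<Phi> (lam i) + \<Phi> (lam j) + (\<Sum>k\<in>?T. \<Phi> (lam k))"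
    using assms(3,5-7) by (simp_all add: sum.remove[of S i] sum.remove[of "S - {i}" j])
  moreover have "\<Phi> (lam i + lam j) + \<Phi> (\<Sum>k\<in>?T. lam k) \<le> \<Phi> (lam i + lam j + (\<Sum>k\<in>?T. lam k))"
    using assms(4-6) by (intro superadditiveD[OF assms(1)] sum_nonneg add_nonneg_nonneg) auto
  moreover have "(\<Sum>k\<in>?T. \<Phi> (lam k)) \<le> \<Phi> (\<Sum>k\<in>?T. lam k)"
    using assms(4) by (intro superadditive_sum_le[OF assms(1,2)]) auto
  ultimately show ?thesis by simp
qed

lemma superadditive_sum_fibres_le_gap:
  assumes "superadditive \<Phi>" "0 \<le> \<Phi> 0" "finite I" "finite C" "a ` I \<subseteq> C"
    and "\<And>j. j \<in> I \<Longrightarrow> 0 \<le> lam j"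
    and "i \<in> I" "j \<in> I" "i \<noteq> j" "a i = a j"
  shows "(\<Sum>j\<in>I. \<Phi> (lam j)) + (\<Phi> (lam i + lam j) - \<Phi> (lam i) - \<Phi> (lam j))
    \<le> (\<Sum>c\<in>C. \<Phi> (\<Sum>j\<in>{j\<in>I. a j = c}. lam j))"
proof -
  let ?fibre = "\<lambda>c. {j\<in>I. a j = c}"
  have "a i \<in> C" using assms(5,7) by auto
  have "(\<Sum>j\<in>I. \<Phi> (lam j)) = (\<Sum>c\<in>C. \<Sum>j\<in>?fibre c. \<Phi> (lam j))"
    using assms(3-5) by (rule sum.group[symmetric])
  also have "\<dots> = (\<Sum>j\<in>?fibre (a i). \<Phi> (lam j)) + (\<Sum>c\<in>C - {a i}. \<Sum>j\<in>?fibre c. \<Phi> (lam j))"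
    using assms(4) \<open>a i \<in> C\<close> by (simp add: sum.remove)
  finally have "(\<Sum>j\<in>I. \<Phi> (lam j)) + (\<Phi> (lam i + lam j) - \<Phi> (lam i) - \<Phi> (lam j))
      = ((\<Sum>k\<in>?fibre (a i). \<Phi> (lam k)) + (\<Phi> (lam i + lam j) - \<Phi> (lam i) - \<Phi> (lam j)))
        + (\<Sum>c\<in>C - {a i}. \<Sum>k\<in>?fibre c. \<Phi> (lam k))"
    by simp
  also have "\<dots> \<le> \<Phi> (\<Sum>k\<in>?fibre (a i). lam k) + (\<Sum>c\<in>C - {a i}. \<Phi> (\<Sum>k\<in>?fibre c. lam k))"
    using assms(3,6-10)
    by (intro add_mono superadditive_sum_le_gap[OF assms(1,2)] sum_mono superadditive_sum_le[OF assms(1,2)]) auto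
  also have "\<dots> = (\<Sum>c\<in>C. \<Phi> (\<Sum>k\<in>?fibre c. lam k))"
    using assms(4) \<open>a i \<in> C\<close> by (simp add: sum.remove)
  finally show ?thesis .
qed

lemma finite_distinct_pairs_image:
  "finite A \<Longrightarrow> finite {f i j | i j. i \<in> A \<and> j \<in> A \<and> i \<noteq> j}"
  by (rule finite_subset[of _ "(\<lambda>(i, j). f i j) ` (A \<times> A)"]) auto

locale ball_construction =
  fixes X :: "'a::euclidean_space set" and R\<^sub>0 R :: real and N :: nat
    and xc :: "nat \<Rightarrow> 'a" and lam :: "nat \<Rightarrow> real" and \<Phi> :: "real \<Rightarrow> real" and h :: "'a \<Rightarrow> real"
  assumes R0_pos: "0 < R\<^sub>0" and R_pos: "0 < R" and N_ge_2: "2 \<le> N"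
    and centres_in_X: "\<And>j. j \<in> {1..N} \<Longrightarrow> xc j \<in> X"
    and Phi_nonneg: "\<And>t. 0 \<le> t \<Longrightarrow> 0 \<le> \<Phi> t"
    and Phi_superadditive: "superadditive \<Phi>"
    and lam_nonneg: "\<And>j. j \<in> {1..N} \<Longrightarrow> 0 \<le> lam j"
    and h_measurable: "(\<lambda>x. indicator ({x. infdist x X \<le> R\<^sub>0} - (\<Union>j\<in>{1..N}. cball (xc j) R)) x * h x)
      \<in> borel_measurable borel"
    and sphere_integral_ge: "\<And>x r. x \<in> X \<Longrightarrow> 0 < r \<Longrightarrow> r \<le> R\<^sub>0 \<Longrightarrow>
      (\<forall>j\<in>{1..N}. sphere x r \<inter> cball (xc j) R = {}) \<Longrightarrow>
      ennreal ((1 / r) * \<Phi> (\<Sum>j\<in>{j\<in>{1..N}. cball (xc j) R \<subseteq> ball x r}. lam j)) \<le> sphere_nn_integral h x r"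
begin

definition domain :: "'a set" where
  "domain = {x. infdist x X \<le> R\<^sub>0} - (\<Union>j\<in>{1..N}. cball (xc j) R)"

definition outer_energy :: "nat set \<Rightarrow> real \<Rightarrow> ennreal" where
  "outer_energy C s = (\<integral>\<^sup>+x. ennreal (h x) * indicator (domain - (\<Union>c\<in>C. cball (xc c) s)) x \<partial>lborel)"

text \<open>The inequality \<open>dist (xc (a j)) (xc j) + R \<le> s\<close> says that \<open>B\<^sub>j\<close> lies in the \<open>s\<close>-ball
  around its cluster centre \<open>a j\<close>.\<close>

definition clustering :: "nat set \<Rightarrow> (nat \<Rightarrow> nat) \<Rightarrow> real \<Rightarrow> bool" where
  "clustering C a s \<longleftrightarrow> C \<subseteq> {1..N} \<and> (\<forall>j\<in>{1..N}. a j \<in> C \<and> dist (xc (a j)) (xc j) + R \<le> s)"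

definition separated :: "nat set \<Rightarrow> real \<Rightarrow> bool" where
  "separated C t \<longleftrightarrow> (\<forall>c1\<in>C. \<forall>c2\<in>C. c1 \<noteq> c2 \<longrightarrow> 2 * t \<le> dist (xc c1) (xc c2))"

definition cluster_energy :: "nat set \<Rightarrow> (nat \<Rightarrow> nat) \<Rightarrow> real" where
  "cluster_energy C a = (\<Sum>c\<in>C. \<Phi> (\<Sum>j\<in>{j\<in>{1..N}. a j = c}. lam j))"

definition growth_radius :: "nat set \<Rightarrow> real" where
  "growth_radius C = Min (insert R\<^sub>0 {dist (xc c1) (xc c2) / 2 | c1 c2. c1 \<in> C \<and> c2 \<in> C \<and> c1 \<noteq> c2})"

definition gap :: real where
  "gap = Min {\<Phi> (lam i + lam j) - \<Phi> (lam i) - \<Phi> (lam j) | i j. i \<in> {1..N} \<and> j \<in> {1..N} \<and> i \<noteq> j}"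

definition half_min_dist :: real where
  "half_min_dist = Min {dist (xc i) (xc j) | i j. i \<in> {1..N} \<and> j \<in> {1..N} \<and> i \<noteq> j} / 2"

definition Phi_total :: real where
  "Phi_total = (\<Sum>j\<in>{1..N}. \<Phi> (lam j))"

text \<open>While fewer than \<open>N\<close> clusters remain, the clusters carry energy at least \<open>Phi_total + gap\<close>
  per unit of \<open>ln\<close> of the radius, and each merge triples the radius.\<close>

definition cluster_bound :: "nat \<Rightarrow> real \<Rightarrow> real" where
  "cluster_bound k s = (Phi_total + gap) * ln (R\<^sub>0 / (3 ^ (k - 1) * s))"

lemma distinct_pairs_nonempty: "{f i j | i j. i \<in> {1..N} \<and> j \<in> {1..N} \<and> i \<noteq> j} \<noteq> {}"
proof -
  have "f 1 2 \<in> {f i j | i j. i \<in> {1..N} \<and> j \<in> {1..N} \<and> i \<noteq> j}"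
    using N_ge_2 by (intro CollectI exI[of _ 1] exI[of _ 2]) auto
  then show ?thesis by blast
qed

lemma gap_le:
  "i \<in> {1..N} \<Longrightarrow> j \<in> {1..N} \<Longrightarrow> i \<noteq> j \<Longrightarrow> gap \<le> \<Phi> (lam i + lam j) - \<Phi> (lam i) - \<Phi> (lam j)"
  unfolding gap_def by (rule Min_le[OF finite_distinct_pairs_image]) auto

lemma gap_nonneg: "0 \<le> gap"
proof -
  have "gap \<in> {\<Phi> (lam i + lam j) - \<Phi> (lam i) - \<Phi> (lam j) | i j. i \<in> {1..N} \<and> j \<in> {1..N} \<and> i \<noteq> j}"
    unfolding gap_def by (rule Min_in[OF finite_distinct_pairs_image distinct_pairs_nonempty]) simp
  then obtain i j where "i \<in> {1..N}" "j \<in> {1..N}" "gap = \<Phi> (lam i + lam j) - \<Phi> (lam i) - \<Phi> (lam j)"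
    by blast
  moreover have "\<Phi> (lam i) + \<Phi> (lam j) \<le> \<Phi> (lam i + lam j)"
    using calculation by (intro superadditiveD[OF Phi_superadditive] lam_nonneg)
  ultimately show ?thesis by simp
qed

lemma Phi_total_nonneg: "0 \<le> Phi_total"
  unfolding Phi_total_def by (intro sum_nonneg Phi_nonneg lam_nonneg)

lemma half_min_dist_attained:
  obtains i j where "i \<in> {1..N}" "j \<in> {1..N}" "i \<noteq> j" "dist (xc i) (xc j) = 2 * half_min_dist"
proof -
  have "Min {dist (xc i) (xc j) | i j. i \<in> {1..N} \<and> j \<in> {1..N} \<and> i \<noteq> j}
      \<in> {dist (xc i) (xc j) | i j. i \<in> {1..N} \<and> j \<in> {1..N} \<and> i \<noteq> j}"
    by (rule Min_in[OF finite_distinct_pairs_image distinct_pairs_nonempty]) simp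
  then show ?thesis using that unfolding half_min_dist_def by fastforce
qed

lemma growth_radius_le_R0: "finite C \<Longrightarrow> growth_radius C \<le> R\<^sub>0"
  unfolding growth_radius_def by (intro Min_le finite.insertI finite_distinct_pairs_image) auto

lemma separated_growth_radius:
  assumes "finite C"
  shows "separated C (growth_radius C)"
  unfolding separated_def
proof (intro ballI impI)
  fix c1 c2 assume "c1 \<in> C" "c2 \<in> C" "c1 \<noteq> c2"
  then have "growth_radius C \<le> dist (xc c1) (xc c2) / 2"
    unfolding growth_radius_def using assms by (intro Min_le finite.insertI finite_distinct_pairs_image) auto
  then show "2 * growth_radius C \<le> dist (xc c1) (xc c2)" by simp
qed

lemma growth_radius_cases:
  assumes "finite C"
  shows "growth_radius C = R\<^sub>0 \<or> (\<exists>c1\<in>C. \<exists>c2\<in>C. c1 \<noteq> c2 \<and> dist (xc c1) (xc c2) = 2 * growth_radius C)"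
proof -
  have "growth_radius C \<in> insert R\<^sub>0 {dist (xc c1) (xc c2) / 2 | c1 c2. c1 \<in> C \<and> c2 \<in> C \<and> c1 \<noteq> c2}"
    unfolding growth_radius_def using assms by (intro Min_in finite.insertI finite_distinct_pairs_image) auto
  then consider "growth_radius C = R\<^sub>0"
    | c1 c2 where "c1 \<in> C" "c2 \<in> C" "c1 \<noteq> c2" "growth_radius C = dist (xc c1) (xc c2) / 2"
    by blast
  then show ?thesis
  proof cases
    case (2 c1 c2)
    then have "dist (xc c1) (xc c2) = 2 * growth_radius C" by simp
    with 2 show ?thesis by blast
  qed simp
qed

lemma clustering_finite: "clustering C a s \<Longrightarrow> finite C"
  unfolding clustering_def by (meson finite_atLeastAtMost finite_subset)

lemma clustering_mono: "clustering C a s \<Longrightarrow> s \<le> s' \<Longrightarrow> clustering C a s'"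
  unfolding clustering_def by force

lemma clustering_identity: "clustering {1..N} (\<lambda>j. j) R"
  unfolding clustering_def by simp

lemma cluster_energy_identity: "cluster_energy {1..N} (\<lambda>j. j) = Phi_total"
  unfolding cluster_energy_def Phi_total_def
proof (intro sum.cong refl)
  fix c assume "c \<in> {1..N}"
  then have "{j\<in>{1..N}. j = c} = {c}" by auto
  then show "\<Phi> (\<Sum>j\<in>{j\<in>{1..N}. j = c}. lam j) = \<Phi> (lam c)" by simp
qed

lemma Phi_total_gap_le_cluster_energy:
  assumes "clustering C a s" "card C < N"
  shows "Phi_total + gap \<le> cluster_energy C a"
proof -
  have "finite C" and image: "a ` {1..N} \<subseteq> C"
    using assms(1) by (auto simp: clustering_finite clustering_def)
  have "\<not> inj_on a {1..N}"
  proof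
    assume "inj_on a {1..N}"
    then have "card (a ` {1..N}) = N" by (simp add: card_image)
    moreover have "card (a ` {1..N}) \<le> card C" using card_mono[OF \<open>finite C\<close> image] .
    ultimately show False using assms(2) by simp
  qed
  then obtain i j where "i \<in> {1..N}" "j \<in> {1..N}" "i \<noteq> j" "a i = a j"
    unfolding inj_on_def by blast
  then have "Phi_total + (\<Phi> (lam i + lam j) - \<Phi> (lam i) - \<Phi> (lam j)) \<le> cluster_energy C a"
    unfolding Phi_total_def cluster_energy_def using \<open>finite C\<close> image
    by (intro superadditive_sum_fibres_le_gap[OF Phi_superadditive]) (auto simp: Phi_nonneg lam_nonneg)
  then show ?thesis using gap_le \<open>i \<in> {1..N}\<close> \<open>j \<in> {1..N}\<close> \<open>i \<noteq> j\<close> by fastforce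
qed

lemma domain_sets [measurable]: "domain \<in> sets borel"
proof -
  have "closed {x. infdist x X \<le> R\<^sub>0}"
    by (intro closed_Collect_le continuous_intros)
  then show ?thesis
    unfolding domain_def by (intro sets.Diff borel_closed closed_UN) auto
qed

lemma h_indicator_measurable:
  assumes [measurable]: "S \<in> sets borel" and "S \<subseteq> domain"
  shows "(\<lambda>x. ennreal (h x) * indicator S x) \<in> borel_measurable borel"
proof -
  have [measurable]: "(\<lambda>x. indicator domain x * h x) \<in> borel_measurable borel"
    using h_measurable unfolding domain_def .
  have "(\<lambda>x. ennreal (h x) * indicator S x) = (\<lambda>x. ennreal (indicator domain x * h x) * indicator S x)"
    using \<open>S \<subseteq> domain\<close> by (intro ext) (auto split: split_indicator)
  then show ?thesis by simp
qed

lemma far_from_other_centres: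
  assumes "separated C t" "c \<in> C" "c' \<in> C" "c' \<noteq> c" "dist (xc c) z < t"
  shows "t < dist (xc c') z"
proof -
  have "2 * t \<le> dist (xc c') (xc c)" using assms(1-4) unfolding separated_def by auto
  moreover have "dist (xc c') (xc c) \<le> dist (xc c') z + dist (xc c) z"
    by (metis dist_commute dist_triangle)
  ultimately show ?thesis using assms(5) by linarith
qed

lemma annulus_in_domain:
  assumes "clustering C a s" "t \<le> R\<^sub>0" "separated C t" "c \<in> C"
    and "s < dist (xc c) z" "dist (xc c) z < t"
  shows "z \<in> domain"
proof -
  have "c \<in> {1..N}" using assms(1,4) by (auto simp: clustering_def)
  have "infdist z X \<le> dist z (xc c)" by (rule infdist_le[OF centres_in_X[OF \<open>c \<in> {1..N}\<close>]])
  then have "infdist z X \<le> R\<^sub>0" using assms(2,6) by (simp add: dist_commute)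
  moreover have "z \<notin> cball (xc j) R" if "j \<in> {1..N}" for j
  proof -
    have "a j \<in> C" "dist (xc (a j)) (xc j) + R \<le> s"
      using assms(1) that by (auto simp: clustering_def)
    moreover have "s < dist (xc (a j)) z"
    proof (cases "a j = c")
      case False
      with far_from_other_centres[OF assms(3,4) \<open>a j \<in> C\<close> _ assms(6)] show ?thesis
        using assms(5,6) by fastforce
    qed (use assms(5) in simp)
    moreover have "dist (xc (a j)) z \<le> dist (xc (a j)) (xc j) + dist (xc j) z" by (rule dist_triangle)
    ultimately show ?thesis by simp
  qed
  ultimately show ?thesis unfolding domain_def by auto
qed

lemma annulus_energy_ge:
  assumes "clustering C a s" "0 < s" "s \<le> t" "t \<le> R\<^sub>0" "separated C t" "c \<in> C"
  shows "ennreal (\<Phi> (\<Sum>j\<in>{j\<in>{1..N}. a j = c}. lam j) * ln (t / s))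
    \<le> (\<integral>\<^sup>+z. ennreal (h z) * indicator {z. s < dist (xc c) z \<and> dist (xc c) z < t} z \<partial>lborel)"
proof (rule nn_integral_annulus_ge)
  show "(\<lambda>z. ennreal (h z) * indicator {z. s < dist (xc c) z \<and> dist (xc c) z < t} z) \<in> borel_measurable borel"
    using annulus_in_domain[OF assms(1,4-6)] by (intro h_indicator_measurable) auto
  show "0 \<le> \<Phi> (\<Sum>j\<in>{j\<in>{1..N}. a j = c}. lam j)"
    by (intro Phi_nonneg sum_nonneg lam_nonneg) auto
  fix r assume "s < r" "r < t"
  have "c \<in> {1..N}" using assms(1,6) by (auto simp: clustering_def)
  have "\<forall>j\<in>{1..N}. sphere (xc c) r \<inter> cball (xc j) R = {}"
    using annulus_in_domain[OF assms(1,4-6)] \<open>s < r\<close> \<open>r < t\<close> unfolding domain_def by auto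
  then have sphere_ge: "ennreal ((1 / r) * \<Phi> (\<Sum>j\<in>{j\<in>{1..N}. cball (xc j) R \<subseteq> ball (xc c) r}. lam j))
      \<le> sphere_nn_integral h (xc c) r"
    using \<open>s < r\<close> \<open>r < t\<close> assms(2,4) by (intro sphere_integral_ge centres_in_X[OF \<open>c \<in> {1..N}\<close>]) auto
  have "{j\<in>{1..N}. a j = c} \<subseteq> {j\<in>{1..N}. cball (xc j) R \<subseteq> ball (xc c) r}"
  proof
    fix j assume "j \<in> {j\<in>{1..N}. a j = c}"
    then have "j \<in> {1..N}" "dist (xc c) (xc j) + R \<le> s" using assms(1) by (auto simp: clustering_def)
    then show "j \<in> {j\<in>{1..N}. cball (xc j) R \<subseteq> ball (xc c) r}"
      using \<open>s < r\<close> by (simp add: cball_subset_ball_iff dist_commute)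
  qed
  then have "(\<Sum>j\<in>{j\<in>{1..N}. a j = c}. lam j) \<le> (\<Sum>j\<in>{j\<in>{1..N}. cball (xc j) R \<subseteq> ball (xc c) r}. lam j)"
    by (intro sum_mono2) (auto simp: lam_nonneg)
  then have "\<Phi> (\<Sum>j\<in>{j\<in>{1..N}. a j = c}. lam j) \<le> \<Phi> (\<Sum>j\<in>{j\<in>{1..N}. cball (xc j) R \<subseteq> ball (xc c) r}. lam j)"
    by (intro superadditive_mono[OF Phi_superadditive Phi_nonneg] sum_nonneg lam_nonneg) auto
  then have "\<Phi> (\<Sum>j\<in>{j\<in>{1..N}. a j = c}. lam j) / r
      \<le> (1 / r) * \<Phi> (\<Sum>j\<in>{j\<in>{1..N}. cball (xc j) R \<subseteq> ball (xc c) r}. lam j)"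
    using \<open>s < r\<close> assms(2) by (simp add: divide_right_mono)
  then show "ennreal (\<Phi> (\<Sum>j\<in>{j\<in>{1..N}. a j = c}. lam j) / r) \<le> sphere_nn_integral h (xc c) r"
    using sphere_ge by (meson ennreal_leI order_trans)
qed (use assms in auto)

lemma outer_energy_growth:
  assumes "clustering C a s" "0 < s" "s \<le> t" "t \<le> R\<^sub>0" "separated C t"
  shows "ennreal (cluster_energy C a * ln (t / s)) + outer_energy C t \<le> outer_energy C s"
proof -
  define Ann where "Ann c = {z. s < dist (xc c) z \<and> dist (xc c) z < t}" for c
  have "finite C" using assms(1) by (rule clustering_finite)
  have [measurable]: "Ann c \<in> sets borel" for c unfolding Ann_def by measurable
  have Ann_measurable: "(\<lambda>z. ennreal (h z) * indicator (Ann c) z) \<in> borel_measurable borel" if "c \<in> C" for c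
    using annulus_in_domain[OF assms(1,4,5) that] by (intro h_indicator_measurable) (auto simp: Ann_def)
  have [measurable]: "(\<Union>c\<in>C. cball (xc c) t) \<in> sets borel"
    using \<open>finite C\<close> by (intro borel_closed closed_UN) auto
  have outer_measurable: "(\<lambda>z. ennreal (h z) * indicator (domain - (\<Union>c\<in>C. cball (xc c) t)) z) \<in> borel_measurable borel"
    by (intro h_indicator_measurable) auto
  have pointwise: "(\<Sum>c\<in>C. ennreal (h z) * indicator (Ann c) z)
      + ennreal (h z) * indicator (domain - (\<Union>c\<in>C. cball (xc c) t)) z
      \<le> ennreal (h z) * indicator (domain - (\<Union>c\<in>C. cball (xc c) s)) z" for z
  proof (cases "\<exists>c\<in>C. z \<in> Ann c")
    case True
    then obtain c where "c \<in> C" "z \<in> Ann c" by blast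
    then have far: "t < dist (xc c') z" if "c' \<in> C" "c' \<noteq> c" for c'
      using far_from_other_centres[OF assms(5) \<open>c \<in> C\<close> that] by (simp add: Ann_def)
    have "(\<Sum>c'\<in>C. ennreal (h z) * indicator (Ann c') z)
        = ennreal (h z) * indicator (Ann c) z + (\<Sum>c'\<in>C - {c}. ennreal (h z) * indicator (Ann c') z)"
      using \<open>finite C\<close> \<open>c \<in> C\<close> by (rule sum.remove)
    also have "(\<Sum>c'\<in>C - {c}. ennreal (h z) * indicator (Ann c') z) = 0"
      using far by (intro sum.neutral) (fastforce simp: Ann_def split: split_indicator)
    finally have "(\<Sum>c'\<in>C. ennreal (h z) * indicator (Ann c') z) = ennreal (h z)"
      using \<open>z \<in> Ann c\<close> by simp
    moreover have "z \<in> domain"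
      using annulus_in_domain[OF assms(1,4,5) \<open>c \<in> C\<close>] \<open>z \<in> Ann c\<close> by (simp add: Ann_def)
    moreover have "z \<in> (\<Union>c\<in>C. cball (xc c) t)" "z \<notin> (\<Union>c\<in>C. cball (xc c) s)"
      using \<open>c \<in> C\<close> \<open>z \<in> Ann c\<close> far assms(3) by (force simp: Ann_def)+
    ultimately show ?thesis by simp
  next
    case False
    then have "(\<Sum>c\<in>C. ennreal (h z) * indicator (Ann c) z) = 0" by (intro sum.neutral) auto
    moreover have "indicator (domain - (\<Union>c\<in>C. cball (xc c) t)) z
        \<le> (indicator (domain - (\<Union>c\<in>C. cball (xc c) s)) z :: ennreal)"
      using assms(3) by (force split: split_indicator)
    ultimately show ?thesis by (simp add: mult_left_mono)
  qed
  have "ennreal (cluster_energy C a * ln (t / s))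
      = (\<Sum>c\<in>C. ennreal (\<Phi> (\<Sum>j\<in>{j\<in>{1..N}. a j = c}. lam j) * ln (t / s)))"
    unfolding cluster_energy_def sum_distrib_right using assms(2,3)
    by (intro sum_ennreal[symmetric] mult_nonneg_nonneg Phi_nonneg sum_nonneg lam_nonneg) auto
  also have "\<dots> \<le> (\<Sum>c\<in>C. \<integral>\<^sup>+z. ennreal (h z) * indicator (Ann c) z \<partial>lborel)"
    unfolding Ann_def using annulus_energy_ge[OF assms] by (intro sum_mono)
  also have "\<dots> = (\<integral>\<^sup>+z. (\<Sum>c\<in>C. ennreal (h z) * indicator (Ann c) z) \<partial>lborel)"
    using Ann_measurable by (intro nn_integral_sum[symmetric]) simp
  finally have "ennreal (cluster_energy C a * ln (t / s)) + outer_energy C t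
      \<le> (\<integral>\<^sup>+z. (\<Sum>c\<in>C. ennreal (h z) * indicator (Ann c) z) \<partial>lborel) + outer_energy C t"
    by (rule add_right_mono)
  also have "\<dots> = (\<integral>\<^sup>+z. (\<Sum>c\<in>C. ennreal (h z) * indicator (Ann c) z)
      + ennreal (h z) * indicator (domain - (\<Union>c\<in>C. cball (xc c) t)) z \<partial>lborel)"
    unfolding outer_energy_def using Ann_measurable outer_measurable
    by (intro nn_integral_add[symmetric] borel_measurable_sum) auto
  also have "\<dots> \<le> outer_energy C s"
    unfolding outer_energy_def by (intro nn_integral_mono pointwise)
  finally show ?thesis .
qed

lemma clustering_merge:
  assumes "clustering C a s" "c1 \<in> C" "c2 \<in> C" "c1 \<noteq> c2" "dist (xc c1) (xc c2) \<le> 2 * s"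
  shows "clustering (C - {c2}) (\<lambda>j. if a j = c2 then c1 else a j) (3 * s)"
  unfolding clustering_def
proof (intro conjI ballI)
  show "C - {c2} \<subseteq> {1..N}" using assms(1) by (auto simp: clustering_def)
  fix j assume "j \<in> {1..N}"
  then have "a j \<in> C" and aj: "dist (xc (a j)) (xc j) + R \<le> s"
    using assms(1) by (auto simp: clustering_def)
  then show "(if a j = c2 then c1 else a j) \<in> C - {c2}" using assms(2,4) by auto
  have "dist (xc c1) (xc (a j)) \<le> 2 * s" if "a j = c2" using that assms(5) by simp
  moreover have "dist (xc c1) (xc j) \<le> dist (xc c1) (xc (a j)) + dist (xc (a j)) (xc j)"
    by (rule dist_triangle)
  moreover have "0 \<le> s" using aj R_pos zero_le_dist[of "xc (a j)" "xc j"] by linarith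
  ultimately show "dist (xc (if a j = c2 then c1 else a j)) (xc j) + R \<le> 3 * s"
    using aj by auto
qed

lemma outer_energy_merge:
  assumes "0 \<le> s" "c1 \<in> C" "c2 \<in> C" "c1 \<noteq> c2" "dist (xc c1) (xc c2) \<le> 2 * s"
  shows "outer_energy (C - {c2}) (3 * s) \<le> outer_energy C s"
proof -
  have covered: "(\<Union>c\<in>C. cball (xc c) s) \<subseteq> (\<Union>c\<in>C - {c2}. cball (xc c) (3 * s))"
  proof
    fix z assume "z \<in> (\<Union>c\<in>C. cball (xc c) s)"
    then obtain c where "c \<in> C" "dist (xc c) z \<le> s" by auto
    show "z \<in> (\<Union>c\<in>C - {c2}. cball (xc c) (3 * s))"
    proof (cases "c = c2")
      case True
      have "dist (xc c1) z \<le> dist (xc c1) (xc c2) + dist (xc c2) z" by (rule dist_triangle)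
      then show ?thesis using True \<open>dist (xc c) z \<le> s\<close> assms(2,4,5) by force
    qed (use \<open>c \<in> C\<close> \<open>dist (xc c) z \<le> s\<close> assms(1) in force)
  qed
  show ?thesis
    unfolding outer_energy_def
    by (intro nn_integral_mono mult_left_mono indicator_leI) (use covered in blast, simp)
qed

lemma cluster_bound_nonpos: "R\<^sub>0 \<le> s \<Longrightarrow> cluster_bound k s \<le> 0"
  unfolding cluster_bound_def using R0_pos Phi_total_nonneg gap_nonneg
  by (intro mult_nonneg_nonpos) (auto simp: order_trans[OF _ mult_right_mono[of 1]])

lemma cluster_bound_split:
  assumes "0 < s" "0 < t"
  shows "cluster_bound k s = (Phi_total + gap) * ln (t / s) + cluster_bound k t"
proof -
  have "ln (R\<^sub>0 / (3 ^ (k - 1) * s)) = ln (t / s) + ln (R\<^sub>0 / (3 ^ (k - 1) * t))"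
    by (rule ln_div_mult_split) (use assms R0_pos in simp_all)
  then show ?thesis unfolding cluster_bound_def by (simp add: distrib_left)
qed

lemma cluster_bound_merge: "2 \<le> k \<Longrightarrow> cluster_bound (k - 1) (3 * s) = cluster_bound k s"
proof -
  assume "2 \<le> k"
  then have "3 ^ (k - 1 - 1) * (3 * s) = 3 ^ (k - 1) * (s :: real)"
    by (cases k) (auto simp: numeral_2_eq_2 Suc_le_eq gr0_conv_Suc)
  then show ?thesis unfolding cluster_bound_def by (simp only:)
qed

lemma cluster_bound_le_outer_energy_if_crowded:
  assumes "clustering C a u" "0 < u"
    and crowded: "R\<^sub>0 \<le> u \<or> (\<exists>c1\<in>C. \<exists>c2\<in>C. c1 \<noteq> c2 \<and> dist (xc c1) (xc c2) \<le> 2 * u)"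
    and merged: "\<And>c a' s'. c \<in> C \<Longrightarrow> clustering (C - {c}) a' s' \<Longrightarrow> 0 < s' \<Longrightarrow>
      ennreal (cluster_bound (card (C - {c})) s') \<le> outer_energy (C - {c}) s'"
  shows "ennreal (cluster_bound (card C) u) \<le> outer_energy C u"
  using crowded
proof
  assume "R\<^sub>0 \<le> u"
  then show ?thesis by (simp add: cluster_bound_nonpos ennreal_neg)
next
  assume "\<exists>c1\<in>C. \<exists>c2\<in>C. c1 \<noteq> c2 \<and> dist (xc c1) (xc c2) \<le> 2 * u"
  then obtain c1 c2 where c12: "c1 \<in> C" "c2 \<in> C" "c1 \<noteq> c2" "dist (xc c1) (xc c2) \<le> 2 * u" by blast
  have "finite C" using assms(1) by (rule clustering_finite)
  have "card {c1, c2} \<le> card C" using \<open>finite C\<close> c12 by (intro card_mono) auto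
  then have "card (C - {c2}) = card C - 1" "2 \<le> card C" using c12 \<open>finite C\<close> by auto
  then have "cluster_bound (card C) u = cluster_bound (card (C - {c2})) (3 * u)"
    by (simp only: cluster_bound_merge)
  also have "ennreal \<dots> \<le> outer_energy (C - {c2}) (3 * u)"
    using assms(2) by (intro merged[OF c12(2) clustering_merge[OF assms(1) c12]]) simp
  also have "\<dots> \<le> outer_energy C u"
    using c12 assms(2) by (intro outer_energy_merge) auto
  finally show ?thesis .
qed

lemma outer_energy_grow_and_merge:
  assumes "clustering C a s" "0 < s"
    and merged: "\<And>c a' s'. c \<in> C \<Longrightarrow> clustering (C - {c}) a' s' \<Longrightarrow> 0 < s' \<Longrightarrow>
      ennreal (cluster_bound (card (C - {c})) s') \<le> outer_energy (C - {c}) s'"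
  shows "ennreal (cluster_energy C a * ln (max s (growth_radius C) / s)
    + cluster_bound (card C) (max s (growth_radius C))) \<le> outer_energy C s"
proof -
  let ?t = "max s (growth_radius C)"
  have "finite C" using assms(1) by (rule clustering_finite)
  have crowded: "R\<^sub>0 \<le> ?t \<or> (\<exists>c1\<in>C. \<exists>c2\<in>C. c1 \<noteq> c2 \<and> dist (xc c1) (xc c2) \<le> 2 * ?t)"
    using growth_radius_cases[OF \<open>finite C\<close>]
  proof
    assume "\<exists>c1\<in>C. \<exists>c2\<in>C. c1 \<noteq> c2 \<and> dist (xc c1) (xc c2) = 2 * growth_radius C"
    then obtain c1 c2 where "c1 \<in> C" "c2 \<in> C" "c1 \<noteq> c2" "dist (xc c1) (xc c2) = 2 * growth_radius C"
      by blast
    moreover from this(4) have "dist (xc c1) (xc c2) \<le> 2 * ?t" by simp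
    ultimately show ?thesis by blast
  qed simp
  have bound: "ennreal (cluster_bound (card C) ?t) \<le> outer_energy C ?t"
    by (rule cluster_bound_le_outer_energy_if_crowded[OF clustering_mono[OF assms(1)] _ crowded merged])
      (use assms(2) in simp_all)
  have growth: "ennreal (cluster_energy C a * ln (?t / s)) + outer_energy C ?t \<le> outer_energy C s"
  proof (cases "growth_radius C \<le> s")
    case True
    then show ?thesis by simp
  next
    case False
    then show ?thesis
      using assms(1,2) growth_radius_le_R0[OF \<open>finite C\<close>] separated_growth_radius[OF \<open>finite C\<close>]
      by (intro outer_energy_growth) auto
  qed
  have "ennreal (cluster_energy C a * ln (?t / s) + cluster_bound (card C) ?t)
      \<le> ennreal (cluster_energy C a * ln (?t / s)) + ennreal (cluster_bound (card C) ?t)"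
    by (rule ennreal_add_le)
  also have "\<dots> \<le> ennreal (cluster_energy C a * ln (?t / s)) + outer_energy C ?t"
    using bound by (rule add_left_mono)
  also have "\<dots> \<le> outer_energy C s" by (rule growth)
  finally show ?thesis .
qed

lemma cluster_bound_le_outer_energy:
  assumes "clustering C a s" "card C < N" "0 < s"
  shows "ennreal (cluster_bound (card C) s) \<le> outer_energy C s"
proof -
  have "finite C" using assms(1) by (rule clustering_finite)
  then show ?thesis using assms
  proof (induction C arbitrary: a s rule: finite_psubset_induct)
    case (psubset C)
    let ?t = "max s (growth_radius C)"
    have "0 < ?t" using psubset.prems(3) by simp
    have "cluster_bound (card C) s = (Phi_total + gap) * ln (?t / s) + cluster_bound (card C) ?t"
      using psubset.prems(3) \<open>0 < ?t\<close> by (rule cluster_bound_split)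
    also have "\<dots> \<le> cluster_energy C a * ln (?t / s) + cluster_bound (card C) ?t"
      using Phi_total_gap_le_cluster_energy[OF psubset.prems(1,2)] psubset.prems(3)
      by (intro add_right_mono mult_right_mono) auto
    finally have "ennreal (cluster_bound (card C) s)
        \<le> ennreal (cluster_energy C a * ln (?t / s) + cluster_bound (card C) ?t)"
      by (rule ennreal_leI)
    also have "\<dots> \<le> outer_energy C s"
    proof (rule outer_energy_grow_and_merge[OF psubset.prems(1,3)])
      fix c a' s' assume "c \<in> C" "clustering (C - {c}) a' s'" "0 < s'"
      moreover have "card (C - {c}) < N"
        using psubset.prems(2) \<open>finite C\<close> \<open>c \<in> C\<close> by (simp add: card_Diff1_less less_imp_diff_less)
      ultimately show "ennreal (cluster_bound (card (C - {c})) s') \<le> outer_energy (C - {c}) s'"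
        by (intro psubset.IH) auto
    qed
    finally show ?case .
  qed
qed

theorem outer_energy_lower_bound:
  "ennreal (ln (R\<^sub>0 / (3 ^ (N - 1) * R)) * Phi_total
      + gap * ln (R\<^sub>0 / (3 ^ (N - 1) * max R half_min_dist))) \<le> outer_energy {1..N} R"
proof -
  let ?t = "max R (growth_radius {1..N})"
  obtain i j where ij: "i \<in> {1..N}" "j \<in> {1..N}" "i \<noteq> j" "dist (xc i) (xc j) = 2 * half_min_dist"
    by (rule half_min_dist_attained)
  then have "growth_radius {1..N} \<le> half_min_dist"
    using separated_growth_radius[of "{1..N}"] unfolding separated_def by fastforce
  then have "?t \<le> max R half_min_dist" by simp
  moreover have "0 < ?t" using R_pos by simp
  ultimately have "gap * ln (R\<^sub>0 / (3 ^ (N - 1) * max R half_min_dist)) \<le> gap * ln (R\<^sub>0 / (3 ^ (N - 1) * ?t))"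
    using R0_pos gap_nonneg by (intro mult_left_mono) (simp_all add: frac_le)
  moreover have "ln (R\<^sub>0 / (3 ^ (N - 1) * R)) = ln (?t / R) + ln (R\<^sub>0 / (3 ^ (N - 1) * ?t))"
    using R0_pos R_pos \<open>0 < ?t\<close> by (intro ln_div_mult_split) simp_all
  ultimately have real_bound: "ln (R\<^sub>0 / (3 ^ (N - 1) * R)) * Phi_total
      + gap * ln (R\<^sub>0 / (3 ^ (N - 1) * max R half_min_dist)) \<le> Phi_total * ln (?t / R) + cluster_bound N ?t"
    unfolding cluster_bound_def by (simp add: algebra_simps)
  have "ennreal (Phi_total * ln (?t / R) + cluster_bound N ?t) \<le> outer_energy {1..N} R"
  proof -
    have "ennreal (cluster_energy {1..N} (\<lambda>j. j) * ln (?t / R) + cluster_bound (card {1..N}) ?t)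
        \<le> outer_energy {1..N} R"
    proof (rule outer_energy_grow_and_merge[OF clustering_identity R_pos])
      fix c a' s' assume "c \<in> {1..N}" "clustering ({1..N} - {c}) a' s'" "0 < s'"
      moreover have "card ({1..N} - {c}) < N" using \<open>c \<in> {1..N}\<close> N_ge_2 by simp
      ultimately show "ennreal (cluster_bound (card ({1..N} - {c})) s') \<le> outer_energy ({1..N} - {c}) s'"
        by (intro cluster_bound_le_outer_energy)
    qed
    then show ?thesis unfolding cluster_energy_identity by simp
  qed
  with ennreal_leI[OF real_bound] show ?thesis by (rule order_trans)
qed

end

theorem lemma10p2:
  fixes X :: "'a::euclidean_space set"
    and R\<^sub>0 R :: real and N :: nat
    and xc :: "nat \<Rightarrow> 'a" and lam :: "nat \<Rightarrow> real"
    and \<Phi> :: "real \<Rightarrow> real" and h :: "'a \<Rightarrow> real"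
  defines "U \<equiv> {x. infdist x X \<le> R\<^sub>0}"
  defines "B \<equiv> (\<lambda>j. cball (xc j) R)"
  defines "D \<equiv> U - (\<Union>j\<in>{1..N}. B j)"
  defines "J \<equiv> (\<lambda>x r. {j\<in>{1..N}. B j \<subseteq> ball x r})"
  defines "b \<equiv> Min {\<Phi> (lam i + lam j) - \<Phi> (lam i) - \<Phi> (lam j) | i j. i \<in> {1..N} \<and> j \<in> {1..N} \<and> i \<noteq> j}"
  defines "m \<equiv> Min {dist (xc i) (xc j) | i j. i \<in> {1..N} \<and> j \<in> {1..N} \<and> i \<noteq> j} / 2"
  defines "\<rho> \<equiv> max R m"
  assumes dim: "DIM('a) \<ge> 2"
    and R0_pos: "R\<^sub>0 > 0"
    and N_ge: "N \<ge> 2"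
    and R_pos: "0 < R" and R_le: "R \<le> R\<^sub>0 / 3 ^ (N - 1)"
    and centers: "\<forall>j\<in>{1..N}. xc j \<in> X"
    and Phi_nonneg: "\<forall>t\<ge>0. \<Phi> t \<ge> 0"
    and Phi_super: "superadditive \<Phi>"
    and lam_nonneg: "\<forall>j\<in>{1..N}. lam j \<ge> 0"
    and h_meas: "(\<lambda>x. indicator D x * h x) \<in> borel_measurable borel"
    and h_nonneg: "\<forall>x\<in>D. h x \<ge> 0"
    and h_sphere: "\<forall>x\<in>X. \<forall>r. 0 < r \<and> r \<le> R\<^sub>0 \<and> (\<forall>j\<in>{1..N}. sphere x r \<inter> B j = {}) \<longrightarrow>
                     sphere_nn_integral h x r \<ge> ennreal ((1 / r) * \<Phi> (\<Sum>j\<in>J x r. lam j))"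
  shows "(\<integral>\<^sup>+ x. ennreal (h x) * indicator D x \<partial>lborel) \<ge>
           ennreal (ln (R\<^sub>0 / (3 ^ (N - 1) * R)) * (\<Sum>j\<in>{1..N}. \<Phi> (lam j))
                    + b * ln (R\<^sub>0 / (3 ^ (N - 1) * \<rho>)))"
proof -
  interpret ball_construction X R\<^sub>0 R N xc lam \<Phi> h
  proof
    show "(\<lambda>x. indicator ({x. infdist x X \<le> R\<^sub>0} - (\<Union>j\<in>{1..N}. cball (xc j) R)) x * h x)
      \<in> borel_measurable borel"
      using h_meas unfolding D_def U_def B_def .
    show "ennreal (1 / r * \<Phi> (\<Sum>j\<in>{j\<in>{1..N}. cball (xc j) R \<subseteq> ball x r}. lam j)) \<le> sphere_nn_integral h x r"
      if "x \<in> X" "0 < r" "r \<le> R\<^sub>0" "\<forall>j\<in>{1..N}. sphere x r \<inter> cball (xc j) R = {}" for x r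
      using h_sphere that unfolding J_def B_def by blast
  qed (use R0_pos R_pos N_ge centers Phi_nonneg Phi_super lam_nonneg in auto)
  have "domain - (\<Union>c\<in>{1..N}. cball (xc c) R) = D"
    unfolding domain_def D_def U_def B_def by auto
  then have "outer_energy {1..N} R = (\<integral>\<^sup>+x. ennreal (h x) * indicator D x \<partial>lborel)"
    unfolding outer_energy_def by simp
  then show ?thesis
    using outer_energy_lower_bound
    unfolding b_def \<rho>_def m_def gap_def half_min_dist_def Phi_total_def by simp
qed

end
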